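(* Let $G$ be a Parametric Timed Game, $R\subseteq L$ a reachability objective, and $W(R)$ the set of winning states of $G$ for $R$. Then $$\mathit{SafePred}\big(W(R)\cup\mathit{WinningMoves}(W(R)),\ \mathit{Uncontrollable}(W(R))\big)\subseteq W(R).$$
   Context: A Parametric Timed Game (PTG) is a tuple $G=(L,X,P,\mathit{Act},T_c,T_u,\ell_0,\mathit{Inv})$ where $L$ is a finite set of locations, $X$ a finite set of clocks, $P$ a finite set of parameters, $\mathit{Act}$ a set of labels, $\ell_0\in L$ the initial location, $T=T_c\cup T_u$ (disjoint union of controllable and uncontrollable transitions) is a finite set of tuples $(\ell,g,a,Y,\ell')$ with $\ell,\ell'\in L$, $a\in\mathit{Act}$, $Y\subseteq X$ and $g$ a guard, and $\mathit{Inv}$ maps each location to a guard. A linear term over $P$ is an expression $k_0+\sum_i k_i p_i$ with $k_i\in\mathbb{Q}$, $p_i\in P$. A guard is a finite conjunction of constraints $x\sim \mathit{plt}$ and $\mathit{plt}'\sim\mathit{plt}$ with $x\in X$, $\sim\in\{<,\le,=,\ge,>\}$, and $\mathit{plt},\mathit{plt}'$ linear terms over $P$. A valuation is a pair $v=(v_X,v_P)$ with $v_X:X\to\mathbb{R}_{\ge0}$ and $v_P:P\to\mathbb{Q}_{\ge0}$; satisfaction $v\models g$ is defined by substituting values. For $\delta\ge0$, $v+\delta=(v_X+\delta,v_P)$ (all clocks increased by $\delta$), and $v[Y:=0]$ sets clocks in $Y$ to $0$ and leaves other clocks and the parameters unchanged. A state is a pair $(\ell,v)$ with $v\models\mathit{Inv}(\ell)$;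 $\mathbb{S}$ is the set of states. Timed transition: for $\delta\in\mathbb{R}_{\ge0}$, $(\ell,v)\to^{\delta}(\ell',v')$ iff both are states, $\ell=\ell'$ and $v'=v+\delta$. Discrete transition: for $t=(\ell,g,a,Y,\ell')\in T$, $(\ell,v)\to^{t}(\ell',v')$ iff both are states, $v\models g$ and $v'=v[Y:=0]$. A run from a state $s_0$ is a finite or infinite sequence $s_0s_1s_2\ldots$ of states with $s_{2i}\to^{\delta_i}s_{2i+1}\to^{t_i}s_{2i+2}$ for some $\delta_i\ge0$, $t_i\in T$ (as long as the sequence continues); a history is a finite prefix of a run, $\mathcal{H}$ the set of histories, and $ls(h)$ the last state of $h$. Coverage: $\mathit{Cover}(s\to^{\delta}s')=\{s''\in\mathbb{S}\mid \exists\,0\le\delta'\le\delta,\ s\to^{\delta'}s''\}$; $\mathit{Cover}(s)=\{s'\mid\exists\delta\ge0,\ s\to^\delta s'\}$; the coverage of a run $r=s_0s_1\ldots$ is the union of $\mathit{Cover}(s_{2i}\to^{\delta}s_{2i+1})$ over its timed transitions, together with $\mathit{Cover}(ls(r))$ if $r$ is finite. For $R\subseteq L$, a run $r$ is winning iff $\mathit{Cover}(r)$ contains a state whose location is in $R$. A controller strategy is a function $\sigma_c:\mathcal{H}\to\mathbb{R}_{\ge0}\cup\{\infty\}\cup T_c$ and an environment strategy a function $\sigma_e:\mathcal{H}\to\mathbb{R}_{\ge0}\cup\{\infty\}\cup T_u$, such that for $\sigma\in\{\sigma_c,\sigma_e\}$ and every $h$: (1) if $\sigma(h)=(\ell,g,a,Y,\ell')\in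 T$ then $ls(h)=(\ell,v)$ with $v\models g$ and $v[Y:=0]\models\mathit{Inv}(\ell')$; (2) if $\sigma(h)=\delta\in\mathbb{R}_{\ge0}$ and $ls(h)\to^{\delta}s$ for some state $s$, then $\sigma(h\to^\delta s)\in T$ (where $h\to^{\delta}s$ is $h$ extended by the delay). The global strategy $\sigma=\sigma_{(\sigma_c,\sigma_e)}$ is: if $\sigma_e(h)=t_u\in T_u$ then $\sigma(h)=t_u$; if $\sigma_c(h)=t_c\in T_c$ and $\sigma_e(h)$ is a delay then $\sigma(h)=t_c$; if both are delays $\delta,\delta'$ then $\sigma(h)=\min(\delta,\delta')$. The run induced by $\sigma$ from $s_0$ is built as follows: at even index $i$, if $\sigma(s_0\ldots s_i)=t\in T$ then $s_{i+1}=s_i$ (delay $0$) and $s_{i+2}$ is the $t$-successor; if it is a delay $\delta$ and a state $s$ with $s_i\to^\delta s$ exists, $s_{i+1}=s$; otherwise the run ends; at odd index $i$, $\sigma(s_0\ldots s_i)$ is a transition $t$ and $s_{i+1}$ is the unique state with $s_i\to^t s_{i+1}$. A run adheres to $\sigma_c$ if it is the run induced by $\sigma_{(\sigma_c,\sigma_e)}$ for some environment strategy $\sigma_e$. A controller strategy is winning from $s$ (for $R$) if all runs from $s$ adhering to it are winning; $s$ is a winning state if such a strategy exists, and $W(R)$ denotes the set of winning states. Operators on sets of states $S,S_1,S_2\subseteq\mathbb{S}$: $\mathit{WinningMoves}(S)=\{s\in\mathbb{S}\mid\exists t\in T_c,\ s'\in S,\ s\to^t s'\}$; $\mathit{Uncontrollable}(S)=\{s\in\mathbb{S}\mid\exists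 t\in T_u,\ s'\notin S,\ s\to^t s'\}$; $\mathit{SafePred}(S_1,S_2)=\{s\in\mathbb{S}\mid \exists s'\in S_1,\ \exists\delta\ge0,\ s\to^\delta s'\ \wedge\ \mathit{Cover}(s\to^\delta s')\cap S_2=\emptyset\}$. *)

theory Defs
  imports "HOL-Library.Extended_Nat" Complex_Main
begin

datatype cmp = Lt | Le | Eq | Ge | Gt

fun cmp_sem :: "cmp \<Rightarrow> real \<Rightarrow> real \<Rightarrow> bool" where
  "cmp_sem Lt a b = (a < b)"
| "cmp_sem Le a b = (a \<le> b)"
| "cmp_sem Eq a b = (a = b)"
| "cmp_sem Ge a b = (a \<ge> b)"
| "cmp_sem Gt a b = (a > b)"

text \<open>A linear term k0 + sum_i k_i p_i over the parameters.\<close>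
type_synonym 'p lterm = "rat \<times> ('p \<Rightarrow> rat)"

datatype ('x, 'p) atom =
    ClockC 'x cmp "'p lterm"
  | ParamC "'p lterm" cmp "'p lterm"

type_synonym ('x, 'p) guard = "('x, 'p) atom list"

type_synonym ('x, 'p) val = "('x \<Rightarrow> real) \<times> ('p \<Rightarrow> rat)"

definition is_val :: "('x, 'p) val \<Rightarrow> bool" where
  "is_val v \<longleftrightarrow> (\<forall>x. fst v x \<ge> 0) \<and> (\<forall>p. snd v p \<ge> 0)"

definition lt_eval :: "('p::finite) lterm \<Rightarrow> ('p \<Rightarrow> rat) \<Rightarrow> real" where
  "lt_eval e vp = real_of_rat (fst e + (\<Sum>p\<in>UNIV. snd e p * vp p))"

fun atom_sat :: "('x, 'p::finite) val \<Rightarrow> ('x, 'p) atom \<Rightarrow> bool" where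
  "atom_sat v (ClockC x c e) = cmp_sem c (fst v x) (lt_eval e (snd v))"
| "atom_sat v (ParamC e1 c e2) = cmp_sem c (lt_eval e1 (snd v)) (lt_eval e2 (snd v))"

definition gsat :: "('x, 'p::finite) val \<Rightarrow> ('x, 'p) guard \<Rightarrow> bool" where
  "gsat v g \<longleftrightarrow> (\<forall>a\<in>set g. atom_sat v a)"

type_synonym ('l, 'x, 'p, 'a) trans = "'l \<times> ('x, 'p) guard \<times> 'a \<times> 'x set \<times> 'l"

record ('l, 'x, 'p, 'a) ptg =
  Tc :: "('l, 'x, 'p, 'a) trans set"
  Tu :: "('l, 'x, 'p, 'a) trans set"
  init :: 'l
  Inv :: "'l \<Rightarrow> ('x, 'p) guard"

definition Tr :: "('l, 'x, 'p, 'a, 'z) ptg_scheme \<Rightarrow> ('l, 'x, 'p, 'a) trans set" where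
  "Tr G = Tc G \<union> Tu G"

definition ptg_wf :: "('l, 'x, 'p, 'a, 'z) ptg_scheme \<Rightarrow> bool" where
  "ptg_wf G \<longleftrightarrow> finite (Tc G) \<and> finite (Tu G) \<and> Tc G \<inter> Tu G = {}"

definition vdelay :: "('x, 'p) val \<Rightarrow> real \<Rightarrow> ('x, 'p) val" where
  "vdelay v d = ((\<lambda>x. fst v x + d), snd v)"

definition vreset :: "('x, 'p) val \<Rightarrow> 'x set \<Rightarrow> ('x, 'p) val" where
  "vreset v Y = ((\<lambda>x. if x \<in> Y then 0 else fst v x), snd v)"

type_synonym ('l, 'x, 'p) state = "'l \<times> ('x, 'p) val"

definition states :: "('l, 'x, 'p::finite, 'a, 'z) ptg_scheme \<Rightarrow> ('l, 'x, 'p) state set" where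
  "states G = {(l, v). is_val v \<and> gsat v (Inv G l)}"

definition timed_step ::
  "('l, 'x, 'p::finite, 'a, 'z) ptg_scheme \<Rightarrow> ('l, 'x, 'p) state \<Rightarrow> real \<Rightarrow> ('l, 'x, 'p) state \<Rightarrow> bool" where
  "timed_step G s d s' \<longleftrightarrow> s \<in> states G \<and> s' \<in> states G \<and> d \<ge> 0 \<and>
     fst s = fst s' \<and> snd s' = vdelay (snd s) d"

definition disc_step ::
  "('l, 'x, 'p::finite, 'a, 'z) ptg_scheme \<Rightarrow> ('l, 'x, 'p) state \<Rightarrow> ('l, 'x, 'p, 'a) trans \<Rightarrow> ('l, 'x, 'p) state \<Rightarrow> bool" where
  "disc_step G s t s' \<longleftrightarrow> t \<in> Tr G \<and> s \<in> states G \<and> s' \<in> states G \<and>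
     (case t of (l, g, a, Y, l') \<Rightarrow>
        fst s = l \<and> fst s' = l' \<and> gsat (snd s) g \<and> snd s' = vreset (snd s) Y)"

definition cover_step ::
  "('l, 'x, 'p::finite, 'a, 'z) ptg_scheme \<Rightarrow> ('l, 'x, 'p) state \<Rightarrow> real \<Rightarrow> ('l, 'x, 'p) state set" where
  "cover_step G s d = {s''. \<exists>d'. 0 \<le> d' \<and> d' \<le> d \<and> timed_step G s d' s''}"

definition cover_state ::
  "('l, 'x, 'p::finite, 'a, 'z) ptg_scheme \<Rightarrow> ('l, 'x, 'p) state \<Rightarrow> ('l, 'x, 'p) state set" where
  "cover_state G s = {s'. \<exists>d. timed_step G s d s'}"

definition histories :: "('l, 'x, 'p::finite, 'a, 'z) ptg_scheme \<Rightarrow> ('l, 'x, 'p) state list set" where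
  "histories G = {h. h \<noteq> [] \<and> h ! 0 \<in> states G \<and>
     (\<forall>i. Suc i < length h \<longrightarrow>
        (even i \<longrightarrow> (\<exists>d. timed_step G (h ! i) d (h ! Suc i))) \<and>
        (odd i \<longrightarrow> (\<exists>t. disc_step G (h ! i) t (h ! Suc i))))}"

datatype 't move = Wait real | Forever | Take 't

type_synonym ('l, 'x, 'p, 'a) strategy = "('l, 'x, 'p) state list \<Rightarrow> ('l, 'x, 'p, 'a) trans move"

definition valid_strategy ::
  "('l, 'x, 'p::finite, 'a, 'z) ptg_scheme \<Rightarrow> ('l, 'x, 'p, 'a) trans set \<Rightarrow> ('l, 'x, 'p, 'a) strategy \<Rightarrow> bool" where
  "valid_strategy G TT \<sigma> \<longleftrightarrow> (\<forall>h\<in>histories G.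
     (\<forall>d. \<sigma> h = Wait d \<longrightarrow> d \<ge> 0) \<and>
     (\<forall>t. \<sigma> h = Take t \<longrightarrow> t \<in> TT \<and>
        (case t of (l, g, a, Y, l') \<Rightarrow>
           fst (last h) = l \<and> gsat (snd (last h)) g \<and> gsat (vreset (snd (last h)) Y) (Inv G l'))) \<and>
     (\<forall>d s. \<sigma> h = Wait d \<longrightarrow> timed_step G (last h) d s \<longrightarrow> h @ [s] \<in> histories G \<longrightarrow>
        (\<exists>t. \<sigma> (h @ [s]) = Take t)))"

definition ctrl_strategy :: "('l, 'x, 'p::finite, 'a, 'z) ptg_scheme \<Rightarrow> ('l, 'x, 'p, 'a) strategy \<Rightarrow> bool" where
  "ctrl_strategy G \<sigma> \<longleftrightarrow> valid_strategy G (Tc G) \<sigma>"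

definition env_strategy :: "('l, 'x, 'p::finite, 'a, 'z) ptg_scheme \<Rightarrow> ('l, 'x, 'p, 'a) strategy \<Rightarrow> bool" where
  "env_strategy G \<sigma> \<longleftrightarrow> valid_strategy G (Tu G) \<sigma>"

fun min_move :: "'t move \<Rightarrow> 't move \<Rightarrow> 't move" where
  "min_move (Wait d) (Wait d') = Wait (min d d')"
| "min_move Forever m = m"
| "min_move m Forever = m"
| "min_move m m' = m"

definition global_strategy ::
  "('l, 'x, 'p, 'a) strategy \<Rightarrow> ('l, 'x, 'p, 'a) strategy \<Rightarrow> ('l, 'x, 'p, 'a) strategy" where
  "global_strategy \<sigma>c \<sigma>e h =
     (case \<sigma>e h of
        Take tu \<Rightarrow> Take tu
      | _ \<Rightarrow> (case \<sigma>c h of Take tc \<Rightarrow> Take tc | _ \<Rightarrow> min_move (\<sigma>c h) (\<sigma>e h)))"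

definition pref :: "(nat \<Rightarrow> 's) \<Rightarrow> nat \<Rightarrow> 's list" where
  "pref r i = map r [0..<Suc i]"

text \<open>A run is given by a state sequence r and its length n (number of states,
  possibly infinite); only r i for i < n is relevant.
  induced_run G sigma s0 r n: (r, n) is the run induced by sigma from s0.\<close>
definition induced_run ::
  "('l, 'x, 'p::finite, 'a, 'z) ptg_scheme \<Rightarrow> ('l, 'x, 'p, 'a) strategy \<Rightarrow> ('l, 'x, 'p) state
    \<Rightarrow> (nat \<Rightarrow> ('l, 'x, 'p) state) \<Rightarrow> enat \<Rightarrow> bool" where
  "induced_run G \<sigma> s0 r n \<longleftrightarrow> 0 < n \<and> r 0 = s0 \<and>
     (\<forall>i. enat i < n \<longrightarrow>
       (even i \<longrightarrow>
          (case \<sigma> (pref r i) of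
             Take t \<Rightarrow> enat (Suc (Suc i)) < n \<and> r (Suc i) = r i \<and> disc_step G (r (Suc i)) t (r (Suc (Suc i)))
           | Wait d \<Rightarrow> (if \<exists>s. timed_step G (r i) d s
                        then enat (Suc i) < n \<and> timed_step G (r i) d (r (Suc i))
                        else n = enat (Suc i))
           | Forever \<Rightarrow> n = enat (Suc i))) \<and>
       (odd i \<longrightarrow> (\<forall>t. \<sigma> (pref r (i - 1)) \<noteq> Take t) \<longrightarrow>
          (case \<sigma> (pref r i) of
             Take t \<Rightarrow> enat (Suc i) < n \<and> disc_step G (r i) t (r (Suc i))
           | _ \<Rightarrow> n = enat (Suc i))))"

definition run_cover ::
  "('l, 'x, 'p::finite, 'a, 'z) ptg_scheme \<Rightarrow> (nat \<Rightarrow> ('l, 'x, 'p) state) \<Rightarrow> enat \<Rightarrow> ('l, 'x, 'p) state set" where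
  "run_cover G r n =
     (\<Union>i\<in>{i. even i \<and> enat (Suc i) < n}.
        \<Union>d\<in>{d. timed_step G (r i) d (r (Suc i))}. cover_step G (r i) d)
     \<union> (\<Union>k\<in>{k. n = enat (Suc k)}. cover_state G (r k))"

definition winning_run ::
  "('l, 'x, 'p::finite, 'a, 'z) ptg_scheme \<Rightarrow> 'l set \<Rightarrow> (nat \<Rightarrow> ('l, 'x, 'p) state) \<Rightarrow> enat \<Rightarrow> bool" where
  "winning_run G R r n \<longleftrightarrow> (\<exists>s\<in>run_cover G r n. fst s \<in> R)"

definition winning_strategy ::
  "('l, 'x, 'p::finite, 'a, 'z) ptg_scheme \<Rightarrow> 'l set \<Rightarrow> ('l, 'x, 'p, 'a) strategy \<Rightarrow> ('l, 'x, 'p) state \<Rightarrow> bool" where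
  "winning_strategy G R \<sigma>c s \<longleftrightarrow> ctrl_strategy G \<sigma>c \<and>
     (\<forall>\<sigma>e r n. env_strategy G \<sigma>e \<longrightarrow> induced_run G (global_strategy \<sigma>c \<sigma>e) s r n \<longrightarrow>
        winning_run G R r n)"

definition W :: "('l, 'x, 'p::finite, 'a, 'z) ptg_scheme \<Rightarrow> 'l set \<Rightarrow> ('l, 'x, 'p) state set" where
  "W G R = {s \<in> states G. \<exists>\<sigma>c. winning_strategy G R \<sigma>c s}"

definition WinningMoves ::
  "('l, 'x, 'p::finite, 'a, 'z) ptg_scheme \<Rightarrow> ('l, 'x, 'p) state set \<Rightarrow> ('l, 'x, 'p) state set" where
  "WinningMoves G S = {s \<in> states G. \<exists>t\<in>Tc G. \<exists>s'\<in>S. disc_step G s t s'}"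

definition Uncontrollable ::
  "('l, 'x, 'p::finite, 'a, 'z) ptg_scheme \<Rightarrow> ('l, 'x, 'p) state set \<Rightarrow> ('l, 'x, 'p) state set" where
  "Uncontrollable G S = {s \<in> states G. \<exists>t\<in>Tu G. \<exists>s'. s' \<notin> S \<and> disc_step G s t s'}"

definition SafePred ::
  "('l, 'x, 'p::finite, 'a, 'z) ptg_scheme \<Rightarrow> ('l, 'x, 'p) state set \<Rightarrow> ('l, 'x, 'p) state set \<Rightarrow> ('l, 'x, 'p) state set" where
  "SafePred G S1 S2 = {s \<in> states G. \<exists>s'\<in>S1. \<exists>d\<ge>0. timed_step G s d s' \<and> cover_step G s d \<inter> S2 = {}}"

end

theory Submission
  imports Defs
begin

text \<open>A state s in SafePred can delay, without passing through a state from which the environment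
  escapes W, to a state s' that is winning or has a controllable move into W. In the latter case the
  controller wins from s by delaying to s', taking that move and then playing a winning strategy;
  if the environment interrupts the delay, it does so from a safe state and hence also moves into W.
  In the former case, the first move of a winning strategy from s' (which is not at a goal location)
  is itself such a safe delay to a winning move, and the two delays concatenate. States at a goal
  location are winning outright.\<close>

text \<open>States and transitions are nested tuples; keep quantifiers over them unsplit.\<close>
declare split_paired_All [simp del] split_paired_Ex [simp del]

section \<open>Delays and discrete steps\<close>

lemma timed_stepD: "timed_step G s d s' \<Longrightarrow> s \<in> states G \<and> s' \<in> states G \<and> 0 \<le> d \<and> fst s' = fst s"
  by (auto simp: timed_step_def)

lemma disc_stepD: "disc_step G s t s' \<Longrightarrow> s \<in> states G \<and> s' \<in> states G \<and> t \<in> Tr G"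
  by (auto simp: disc_step_def)

lemma timed_step_det: "timed_step G s d s' \<Longrightarrow> timed_step G s d s'' \<Longrightarrow> s' = s''"
  by (auto simp: timed_step_def prod_eq_iff)

lemma disc_step_det: "disc_step G s t s' \<Longrightarrow> disc_step G s t s'' \<Longrightarrow> s' = s''"
  by (auto simp: disc_step_def prod_eq_iff split: prod.splits)

lemma timed_step_zero: "s \<in> states G \<Longrightarrow> timed_step G s 0 s"
  by (auto simp: timed_step_def vdelay_def)

lemma timed_step_add: "timed_step G s d s' \<Longrightarrow> timed_step G s' e s'' \<Longrightarrow> timed_step G s (d + e) s''"
  by (auto simp: timed_step_def vdelay_def algebra_simps)

lemma timed_step_diff: "timed_step G s d s' \<Longrightarrow> timed_step G s e s'' \<Longrightarrow> d \<le> e \<Longrightarrow> timed_step G s' (e - d) s''"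
  by (auto simp: timed_step_def vdelay_def algebra_simps)

lemma cmp_sem_convex: "cmp_sem c a b \<Longrightarrow> cmp_sem c (a + d) b \<Longrightarrow> 0 \<le> e \<Longrightarrow> e \<le> d \<Longrightarrow> cmp_sem c (a + e) b"
  by (cases c) auto

text \<open>Guards and invariants are conjunctions of convex constraints, so a delay that is allowed
  remains allowed when shortened.\<close>

lemma timed_step_shorter:
  assumes "timed_step G s d s'" "0 \<le> e" "e \<le> d"
  shows "\<exists>s''. timed_step G s e s''"
proof -
  obtain l v where s: "s = (l, v)" by (cases s)
  have v: "is_val v" "gsat v (Inv G l)" and vd: "gsat (vdelay v d) (Inv G l)"
    using assms(1) s by (auto simp: timed_step_def states_def)
  have "atom_sat (vdelay v e) a" if "a \<in> set (Inv G l)" for a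
  proof (cases a)
    case (ClockC x c t)
    with that v vd have "cmp_sem c (fst v x) (lt_eval t (snd v))" "cmp_sem c (fst v x + d) (lt_eval t (snd v))"
      by (auto simp: gsat_def vdelay_def)
    with ClockC assms(2,3) show ?thesis
      using cmp_sem_convex by (auto simp: vdelay_def)
  next
    case (ParamC t c t')
    with that v show ?thesis by (auto simp: gsat_def vdelay_def)
  qed
  moreover have "is_val (vdelay v e)"
    using v assms(2) by (auto simp: is_val_def vdelay_def)
  ultimately have "timed_step G s e (l, vdelay v e)"
    using s v assms by (auto simp: timed_step_def states_def gsat_def)
  then show ?thesis by blast
qed

definition enabled :: "('l, 'x, 'p::finite, 'a, 'z) ptg_scheme \<Rightarrow> ('l, 'x, 'p) state \<Rightarrow> ('l, 'x, 'p, 'a) trans \<Rightarrow> bool" where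
  "enabled G s t \<longleftrightarrow> (case t of (l, g, a, Y, l') \<Rightarrow>
     fst s = l \<and> gsat (snd s) g \<and> gsat (vreset (snd s) Y) (Inv G l'))"

lemma disc_step_enabled: "disc_step G s t s' \<Longrightarrow> enabled G s t"
  by (auto simp: disc_step_def enabled_def states_def split: prod.splits)

lemma enabled_disc_stepE:
  assumes "t \<in> Tr G" "s \<in> states G" "enabled G s t"
  obtains s' where "disc_step G s t s'"
proof -
  obtain l g a Y l' where t: "t = (l, g, a, Y, l')" by (cases t) auto
  have "is_val (vreset (snd s) Y)"
    using assms(2) by (auto simp: states_def is_val_def vreset_def)
  then have "disc_step G s t (l', vreset (snd s) Y)"
    using assms t by (auto simp: disc_step_def enabled_def states_def)
  then show thesis by (rule that)
qed

section \<open>Coverage\<close>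

lemma cover_step_fst: "s' \<in> cover_step G s d \<Longrightarrow> fst s' = fst s"
  by (auto simp: cover_step_def timed_step_def)

lemma cover_state_fst: "s' \<in> cover_state G s \<Longrightarrow> fst s' = fst s"
  by (auto simp: cover_state_def timed_step_def)

lemma timed_step_in_cover_step: "timed_step G s e s' \<Longrightarrow> e \<le> d \<Longrightarrow> s' \<in> cover_step G s d"
  by (auto simp: cover_step_def timed_step_def)

lemma cover_step_zero: "s \<in> states G \<Longrightarrow> cover_step G s 0 = {s}"
  by (auto simp: cover_step_def timed_step_zero dest: timed_step_det[OF timed_step_zero])

lemma cover_step_add:
  assumes "timed_step G s d s'"
  shows "cover_step G s (d + e) \<subseteq> cover_step G s d \<union> cover_step G s' e"
proof
  fix z assume "z \<in> cover_step G s (d + e)"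
  then obtain c where c: "0 \<le> c" "c \<le> d + e" "timed_step G s c z" by (auto simp: cover_step_def)
  show "z \<in> cover_step G s d \<union> cover_step G s' e"
  proof (cases "c \<le> d")
    case True
    with c show ?thesis by (auto simp: cover_step_def)
  next
    case False
    with c timed_step_diff[OF assms c(3)] show ?thesis by (auto simp: cover_step_def)
  qed
qed

section \<open>Histories and strategies\<close>

lemma singleton_history: "s \<in> states G \<Longrightarrow> [s] \<in> histories G"
  by (auto simp: histories_def)

lemma two_state_history: "timed_step G s d s' \<Longrightarrow> [s, s'] \<in> histories G"
  by (auto simp: histories_def timed_step_def)

lemma all_Suc_less_Cons2_iff:
  "(\<forall>i. Suc i < length (a # b # h) \<longrightarrow> P i) \<longleftrightarrow>
    P 0 \<and> (h \<noteq> [] \<longrightarrow> P 1) \<and> (\<forall>i. Suc i < length h \<longrightarrow> P (Suc (Suc i)))"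
proof (intro iffI conjI allI impI)
  fix i assume "P 0 \<and> (h \<noteq> [] \<longrightarrow> P 1) \<and> (\<forall>i. Suc i < length h \<longrightarrow> P (Suc (Suc i)))"
    and "Suc i < length (a # b # h)"
  then show "P i" by (cases i; cases "i - 1") auto
qed auto

lemma histories_Cons2_iff:
  assumes "h \<noteq> []"
  shows "a # b # h \<in> histories G \<longleftrightarrow>
    (\<exists>d. timed_step G a d b) \<and> (\<exists>t. disc_step G b t (hd h)) \<and> h \<in> histories G"
proof -
  have "h ! 0 = hd h" using assms by (simp add: hd_conv_nth)
  then show ?thesis
    using assms unfolding histories_def mem_Collect_eq all_Suc_less_Cons2_iff
    by (auto dest: timed_stepD disc_stepD)
qed

lemma histories_Cons2D: "a # b # h \<in> histories G \<Longrightarrow> h \<noteq> [] \<Longrightarrow> h \<in> histories G"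
  using histories_Cons2_iff by blast

lemma valid_strategy_iff:
  "valid_strategy G TT \<sigma> \<longleftrightarrow> (\<forall>h\<in>histories G.
     (\<forall>d. \<sigma> h = Wait d \<longrightarrow> 0 \<le> d) \<and>
     (\<forall>t. \<sigma> h = Take t \<longrightarrow> t \<in> TT \<and> enabled G (last h) t) \<and>
     (\<forall>d s. \<sigma> h = Wait d \<longrightarrow> timed_step G (last h) d s \<longrightarrow> h @ [s] \<in> histories G \<longrightarrow>
        (\<exists>t. \<sigma> (h @ [s]) = Take t)))"
  unfolding valid_strategy_def enabled_def ..

lemma valid_strategyI:
  assumes "\<And>h d. h \<in> histories G \<Longrightarrow> \<sigma> h = Wait d \<Longrightarrow> 0 \<le> d"
    and "\<And>h t. h \<in> histories G \<Longrightarrow> \<sigma> h = Take t \<Longrightarrow> t \<in> TT \<and> enabled G (last h) t"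
    and "\<And>h d s. h \<in> histories G \<Longrightarrow> \<sigma> h = Wait d \<Longrightarrow> timed_step G (last h) d s \<Longrightarrow>
      h @ [s] \<in> histories G \<Longrightarrow> \<exists>t. \<sigma> (h @ [s]) = Take t"
  shows "valid_strategy G TT \<sigma>"
  using assms unfolding valid_strategy_iff by blast

lemma valid_strategy_TakeD:
  "valid_strategy G TT \<sigma> \<Longrightarrow> h \<in> histories G \<Longrightarrow> \<sigma> h = Take t \<Longrightarrow> t \<in> TT \<and> enabled G (last h) t"
  unfolding valid_strategy_iff by blast

lemma valid_strategy_WaitD:
  "valid_strategy G TT \<sigma> \<Longrightarrow> h \<in> histories G \<Longrightarrow> \<sigma> h = Wait d \<Longrightarrow> 0 \<le> d"
  unfolding valid_strategy_iff by blast

lemma valid_strategy_Wait_TakeD: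
  "valid_strategy G TT \<sigma> \<Longrightarrow> h \<in> histories G \<Longrightarrow> \<sigma> h = Wait d \<Longrightarrow>
    timed_step G (last h) d s \<Longrightarrow> h @ [s] \<in> histories G \<Longrightarrow> \<exists>t. \<sigma> (h @ [s]) = Take t"
  unfolding valid_strategy_iff by blast

lemma valid_strategy_Forever: "valid_strategy G TT (\<lambda>h. Forever)"
  by (simp add: valid_strategy_def)

lemma valid_strategy_by_first_state:
  assumes "\<And>y. valid_strategy G TT (F y)"
  shows "valid_strategy G TT (\<lambda>h. F (hd h) h)"
proof (rule valid_strategyI)
  fix h d s
  assume "h \<in> histories G" "F (hd h) h = Wait d" "timed_step G (last h) d s" "h @ [s] \<in> histories G"
  moreover from this(1) have "hd (h @ [s]) = hd h" by (simp add: histories_def)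
  ultimately show "\<exists>t. F (hd (h @ [s])) (h @ [s]) = Take t"
    using valid_strategy_Wait_TakeD[OF assms] by simp
qed (use valid_strategy_WaitD[OF assms] valid_strategy_TakeD[OF assms] in blast)+

definition residual_strategy ::
  "('l, 'x, 'p, 'a) strategy \<Rightarrow> ('l, 'x, 'p) state \<Rightarrow> ('l, 'x, 'p) state \<Rightarrow> ('l, 'x, 'p) state
    \<Rightarrow> ('l, 'x, 'p, 'a) strategy" where
  "residual_strategy \<sigma> x0 x1 y h = (if h \<noteq> [] \<and> hd h = y then \<sigma> (x0 # x1 # h) else Forever)"

lemma valid_residual_strategy:
  assumes \<sigma>: "valid_strategy G TT \<sigma>" and steps: "timed_step G x0 d x1" "disc_step G x1 t y"
  shows "valid_strategy G TT (residual_strategy \<sigma> x0 x1 y)"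
proof -
  have prefixed: "x0 # x1 # h \<in> histories G" if "h \<in> histories G" "hd h = y" for h
  proof -
    have "h \<noteq> []" using that(1) by (simp add: histories_def)
    then show ?thesis using that steps histories_Cons2_iff by blast
  qed
  show ?thesis
  proof (rule valid_strategyI)
    fix h d s
    assume h: "h \<in> histories G" and "residual_strategy \<sigma> x0 x1 y h = Wait d"
      and "timed_step G (last h) d s" "h @ [s] \<in> histories G"
    moreover from this have "h \<noteq> []" "hd h = y" "hd (h @ [s]) = y"
      by (auto simp: residual_strategy_def split: if_splits)
    ultimately show "\<exists>t. residual_strategy \<sigma> x0 x1 y (h @ [s]) = Take t"
      using valid_strategy_Wait_TakeD[OF \<sigma> prefixed[OF h], of d s] prefixed[of "h @ [s]"]
      by (simp add: residual_strategy_def)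
  qed (use valid_strategy_WaitD[OF \<sigma> prefixed] valid_strategy_TakeD[OF \<sigma> prefixed] in
       \<open>fastforce simp: residual_strategy_def split: if_splits\<close>)+
qed

text \<open>Plays m0 at s and m1 after the delay from s to x; once the first discrete step is taken,
  f is played on the rest of the history, whatever state the delay actually reached.\<close>

definition prefixed_strategy ::
  "('l, 'x, 'p, 'a) trans move \<Rightarrow> ('l, 'x, 'p, 'a) trans move \<Rightarrow> ('l, 'x, 'p) state \<Rightarrow> ('l, 'x, 'p) state
    \<Rightarrow> ('l, 'x, 'p, 'a) strategy \<Rightarrow> ('l, 'x, 'p, 'a) strategy" where
  "prefixed_strategy m0 m1 s x f h =
     (if h = [s] then m0 else if h = [s, x] then m1
      else if 2 < length h \<and> hd h = s then f (drop 2 h) else Forever)"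

lemma prefixed_strategy_Cons2: "h \<noteq> [] \<Longrightarrow> prefixed_strategy m0 m1 s x f (s # b # h) = f h"
  by (cases h) (auto simp: prefixed_strategy_def)

lemma prefixed_strategy_cases:
  obtains (other) "prefixed_strategy m0 m1 s x f h = Forever"
    | (start) "h = [s]" | (delayed) "h = [s, x]"
    | (after) b rest where "h = s # b # rest" "rest \<noteq> []"
proof (cases "2 < length h \<and> hd h = s")
  case True
  then obtain b rest where "h = s # b # rest" "rest \<noteq> []"
    by (cases h; cases "tl h") auto
  then show thesis by (rule after)
next
  case False
  then show thesis
    using start delayed other
    by (cases "h = [s]"; cases "h = [s, x]") (auto simp: prefixed_strategy_def)
qed

lemma valid_prefixed_strategy:
  assumes f: "valid_strategy G TT f"
    and m0_Wait: "\<And>d. m0 = Wait d \<Longrightarrow> timed_step G s d x \<and> (\<exists>t. m1 = Take t)"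
    and m0_Take: "\<And>t. m0 = Take t \<Longrightarrow> t \<in> TT \<and> enabled G s t"
    and m1_Take: "\<And>t. m1 = Take t \<Longrightarrow> t \<in> TT \<and> enabled G x t"
    and m1_not_Wait: "\<And>d. m1 \<noteq> Wait d"
  shows "valid_strategy G TT (prefixed_strategy m0 m1 s x f)"
    (is "valid_strategy G TT ?\<sigma>")
proof (rule valid_strategyI)
  fix h d
  assume h: "h \<in> histories G" and w: "?\<sigma> h = Wait d"
  show "0 \<le> d"
  proof (cases rule: prefixed_strategy_cases[of m0 m1 s x f h])
    case start
    with w m0_Wait show ?thesis by (auto simp: prefixed_strategy_def dest: timed_stepD)
  next
    case (after b rest)
    with h have "rest \<in> histories G" by (blast intro: histories_Cons2D)
    with after w show ?thesis
      using valid_strategy_WaitD[OF f] by (simp add: prefixed_strategy_Cons2)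
  qed (use w m1_not_Wait in \<open>simp_all add: prefixed_strategy_def\<close>)
next
  fix h t
  assume h: "h \<in> histories G" and t: "?\<sigma> h = Take t"
  show "t \<in> TT \<and> enabled G (last h) t"
  proof (cases rule: prefixed_strategy_cases[of m0 m1 s x f h])
    case (after b rest)
    with h have "rest \<in> histories G" by (blast intro: histories_Cons2D)
    with after t show ?thesis
      using valid_strategy_TakeD[OF f] by (simp add: prefixed_strategy_Cons2)
  qed (use t m0_Take m1_Take in \<open>simp_all add: prefixed_strategy_def\<close>)
next
  fix h d z
  assume h: "h \<in> histories G" and w: "?\<sigma> h = Wait d"
    and z: "timed_step G (last h) d z" "h @ [z] \<in> histories G"
  show "\<exists>t. ?\<sigma> (h @ [z]) = Take t"
  proof (cases rule: prefixed_strategy_cases[of m0 m1 s x f h])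
    case start
    with w m0_Wait z show ?thesis
      by (auto simp: prefixed_strategy_def dest: timed_step_det)
  next
    case (after b rest)
    then have "rest \<in> histories G" "rest @ [z] \<in> histories G"
      using h z(2) by (auto intro: histories_Cons2D)
    with after w z show ?thesis
      using valid_strategy_Wait_TakeD[OF f] by (simp add: prefixed_strategy_Cons2)
  qed (use w m1_not_Wait in \<open>simp_all add: prefixed_strategy_def\<close>)
qed

section \<open>Induced runs\<close>

lemma pref_Suc: "pref r (Suc i) = pref r i @ [r (Suc i)]"
  by (simp add: pref_def)

lemma pref_0 [simp]: "pref r 0 = [r 0]"
  by (simp add: pref_def)

lemma pref_1 [simp]: "pref r (Suc 0) = [r 0, r (Suc 0)]"
  by (simp add: pref_def)

lemma pref_not_Nil [simp]: "pref r i \<noteq> []"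
  by (simp add: pref_def)

lemma hd_pref [simp]: "hd (pref r i) = r 0"
  by (simp add: pref_def hd_map del: upt_Suc)

lemma pref_Suc_Suc: "pref r (Suc (Suc i)) = r 0 # r (Suc 0) # pref (\<lambda>k. r (Suc (Suc k))) i"
  by (induction i) (simp_all add: pref_Suc pref_def)

lemma enat_Suc_Suc_less_add_2 [simp]: "enat (Suc (Suc j)) < n + 2 \<longleftrightarrow> enat j < n"
  by (cases n) (auto simp: numeral_eq_enat)

lemma add_2_eq_enat_Suc_Suc [simp]: "n + 2 = enat (Suc (Suc j)) \<longleftrightarrow> n = enat j"
  by (cases n) (auto simp: numeral_eq_enat)

definition induced_step ::
  "('l, 'x, 'p::finite, 'a, 'z) ptg_scheme \<Rightarrow> ('l, 'x, 'p, 'a) strategy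
    \<Rightarrow> (nat \<Rightarrow> ('l, 'x, 'p) state) \<Rightarrow> enat \<Rightarrow> nat \<Rightarrow> bool" where
  "induced_step G \<sigma> r n i \<longleftrightarrow>
     (even i \<longrightarrow>
        (case \<sigma> (pref r i) of
           Take t \<Rightarrow> enat (Suc (Suc i)) < n \<and> r (Suc i) = r i \<and> disc_step G (r (Suc i)) t (r (Suc (Suc i)))
         | Wait d \<Rightarrow> (if \<exists>s. timed_step G (r i) d s
                      then enat (Suc i) < n \<and> timed_step G (r i) d (r (Suc i))
                      else n = enat (Suc i))
         | Forever \<Rightarrow> n = enat (Suc i))) \<and>
     (odd i \<longrightarrow> (\<forall>t. \<sigma> (pref r (i - 1)) \<noteq> Take t) \<longrightarrow>
        (case \<sigma> (pref r i) of
           Take t \<Rightarrow> enat (Suc i) < n \<and> disc_step G (r i) t (r (Suc i))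
         | _ \<Rightarrow> n = enat (Suc i)))"

lemma induced_run_iff:
  "induced_run G \<sigma> s r n \<longleftrightarrow> 0 < n \<and> r 0 = s \<and> (\<forall>i. enat i < n \<longrightarrow> induced_step G \<sigma> r n i)"
  unfolding induced_run_def induced_step_def by simp

lemma induced_stepD: "induced_run G \<sigma> s r n \<Longrightarrow> enat i < n \<Longrightarrow> induced_step G \<sigma> r n i"
  by (simp add: induced_run_iff)

lemma induced_step_Cons2:
  assumes "\<And>h. h \<noteq> [] \<Longrightarrow> hd h = r (Suc (Suc 0)) \<Longrightarrow> \<sigma> (r 0 # r (Suc 0) # h) = \<sigma>' h"
  shows "induced_step G \<sigma> r (n + 2) (Suc (Suc j)) \<longleftrightarrow> induced_step G \<sigma>' (\<lambda>k. r (Suc (Suc k))) n j"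
proof -
  have shift: "\<sigma> (pref r (Suc (Suc i))) = \<sigma>' (pref (\<lambda>k. r (Suc (Suc k))) i)" for i
    by (simp add: pref_Suc_Suc assms)
  have "odd j \<Longrightarrow> \<sigma> (pref r (Suc j)) = \<sigma>' (pref (\<lambda>k. r (Suc (Suc k))) (j - 1))"
    using shift[of "j - 1"] by (cases j) auto
  with shift show ?thesis
    unfolding induced_step_def by (cases "odd j") (simp_all split: move.split)
qed

lemma induced_run_suffix:
  assumes run: "induced_run G \<sigma> s r (n + 2)" and "0 < n"
    and agree: "\<And>h. h \<noteq> [] \<Longrightarrow> hd h = r (Suc (Suc 0)) \<Longrightarrow> \<sigma> (r 0 # r (Suc 0) # h) = \<sigma>' h"
  shows "induced_run G \<sigma>' (r (Suc (Suc 0))) (\<lambda>k. r (Suc (Suc k))) n"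
  unfolding induced_run_iff
proof (intro conjI allI impI \<open>0 < n\<close> refl)
  fix j assume "enat j < n"
  with run have "induced_step G \<sigma> r (n + 2) (Suc (Suc j))"
    by (simp add: induced_run_iff)
  with induced_step_Cons2[of r \<sigma> \<sigma>', OF agree] show "induced_step G \<sigma>' (\<lambda>k. r (Suc (Suc k))) n j"
    by blast
qed

lemma induced_run_Cons2:
  assumes run: "induced_run G \<sigma>' y r n"
    and agree: "\<And>h. h \<noteq> [] \<Longrightarrow> hd h = y \<Longrightarrow> \<sigma> (s # x # h) = \<sigma>' h"
    and first: "(\<sigma> [s] = Take t \<and> x = s \<and> disc_step G x t y) \<or>
      (\<sigma> [s] = Wait \<delta> \<and> timed_step G s \<delta> x \<and> \<sigma> [s, x] = Take t \<and> disc_step G x t y)"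
  shows "induced_run G \<sigma> s (case_nat s (case_nat x r)) (n + 2)"
    (is "induced_run G \<sigma> s ?r _")
proof -
  have "0 < n" and "r 0 = y" and steps: "\<And>j. enat j < n \<Longrightarrow> induced_step G \<sigma>' r n j"
    using run by (auto simp: induced_run_iff)
  have n2: "enat (Suc (Suc 0)) < n + 2" "enat (Suc 0) < n + 2"
    using \<open>0 < n\<close> by (cases n; simp add: numeral_eq_enat zero_enat_def)+
  have agree': "\<And>h. h \<noteq> [] \<Longrightarrow> hd h = ?r (Suc (Suc 0)) \<Longrightarrow> \<sigma> (?r 0 # ?r (Suc 0) # h) = \<sigma>' h"
    using agree \<open>r 0 = y\<close> by simp
  have "induced_step G \<sigma> ?r (n + 2) i" if "enat i < n + 2" for i
  proof -
    consider "i = 0" | "i = Suc 0" | (later) j where "i = Suc (Suc j)"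
      by (cases i; cases "i - 1") auto
    then show ?thesis
    proof cases
      case later
      with that have "induced_step G \<sigma>' r n j" by (simp add: steps)
      with later induced_step_Cons2[of ?r \<sigma> \<sigma>', OF agree'] show ?thesis by auto
    qed (use first n2 \<open>r 0 = y\<close> in \<open>auto simp: induced_step_def\<close>)+
  qed
  with \<open>0 < n\<close> show ?thesis unfolding induced_run_iff by (simp add: n2)
qed

lemma induced_run_TakeD:
  assumes "induced_run G \<sigma> s r n" "\<sigma> [s] = Take t"
  shows "enat (Suc (Suc 0)) < n \<and> r (Suc 0) = s \<and> disc_step G s t (r (Suc (Suc 0)))"
  using assms induced_stepD[OF assms(1), of 0] by (auto simp: induced_run_iff induced_step_def zero_enat_def)

lemma induced_run_WaitD:
  assumes "induced_run G \<sigma> s r n" "\<sigma> [s] = Wait d" "timed_step G s d z"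
  shows "enat (Suc 0) < n \<and> timed_step G s d (r (Suc 0))"
proof -
  have "r 0 = s" "induced_step G \<sigma> r n 0"
    using assms(1) by (auto simp: induced_run_iff zero_enat_def)
  with assms(2,3) show ?thesis
    by (auto simp: induced_step_def split: if_splits)
qed

lemma induced_run_Wait_TakeD:
  assumes "induced_run G \<sigma> s r n" "\<sigma> [s] = Wait d" "enat (Suc 0) < n" "\<sigma> [s, r (Suc 0)] = Take t"
  shows "enat (Suc (Suc 0)) < n \<and> disc_step G (r (Suc 0)) t (r (Suc (Suc 0)))"
  using assms induced_stepD[OF assms(1,3)] by (auto simp: induced_run_iff induced_step_def)

lemma induced_run_stop:
  assumes "\<sigma> [s] = Forever \<or> (\<sigma> [s] = Wait d \<and> (\<nexists>z. timed_step G s d z))"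
  shows "induced_run G \<sigma> s (\<lambda>_. s) (enat (Suc 0))"
  using assms by (auto simp: induced_run_def zero_enat_def)

lemma induced_run_first_steps:
  assumes run: "induced_run G \<sigma> s r n" and n: "enat (Suc 0) < n"
  shows "\<exists>d. timed_step G s d (r (Suc 0))"
    and "enat (Suc (Suc 0)) < n \<Longrightarrow> \<exists>t. disc_step G (r (Suc 0)) t (r (Suc (Suc 0)))"
proof -
  have r0: "r 0 = s" and step0: "induced_step G \<sigma> r n 0"
    using run by (auto simp: induced_run_iff zero_enat_def)
  from step0 n r0 consider (take) t where "\<sigma> [s] = Take t"
    | (wait) d where "\<sigma> [s] = Wait d" "timed_step G s d (r (Suc 0))"
    by (cases "\<sigma> [s]") (auto simp: induced_step_def split: if_splits)
  note first_move = this
  show "\<exists>d. timed_step G s d (r (Suc 0))"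
    using first_move
  proof cases
    case (take t)
    with induced_run_TakeD[OF run] show ?thesis by (metis disc_stepD timed_step_zero)
  qed blast
  assume n2: "enat (Suc (Suc 0)) < n"
  show "\<exists>t. disc_step G (r (Suc 0)) t (r (Suc (Suc 0)))"
    using first_move
  proof cases
    case (take t)
    with induced_run_TakeD[OF run] show ?thesis by blast
  next
    case (wait d)
    have "induced_step G \<sigma> r n (Suc 0)"
      using induced_stepD[OF run n] .
    with wait r0 n2 obtain t where "\<sigma> [s, r (Suc 0)] = Take t"
      by (cases "\<sigma> [s, r (Suc 0)]") (auto simp: induced_step_def)
    with induced_run_Wait_TakeD[OF run wait(1) n] show ?thesis by blast
  qed
qed

lemma start_in_run_cover:
  assumes run: "induced_run G \<sigma> s r n" and "s \<in> states G"
  shows "s \<in> run_cover G r n"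
proof (cases "enat (Suc 0) < n")
  case True
  with induced_run_first_steps(1)[OF run] obtain d where "timed_step G s d (r (Suc 0))"
    by blast
  moreover have "s \<in> cover_step G s d"
    using calculation \<open>s \<in> states G\<close> by (auto intro: timed_step_in_cover_step timed_step_zero dest: timed_stepD)
  ultimately show ?thesis
    using run True unfolding run_cover_def by (auto simp: induced_run_iff)
next
  case False
  have "0 < n" "r 0 = s"
    using run by (auto simp: induced_run_iff)
  with False have "n = enat (Suc 0)"
    by (cases n) (auto simp: zero_enat_def)
  moreover have "s \<in> cover_state G (r 0)"
    using timed_step_zero[OF \<open>s \<in> states G\<close>] \<open>r 0 = s\<close> by (auto simp: cover_state_def)
  ultimately show ?thesis unfolding run_cover_def by auto
qed

lemma run_cover_suffix_subset: "run_cover G (\<lambda>k. r (Suc (Suc k))) n \<subseteq> run_cover G r (n + 2)"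
proof
  fix z assume "z \<in> run_cover G (\<lambda>k. r (Suc (Suc k))) n"
  then consider (delay) i d where "even i" "enat (Suc i) < n"
      "timed_step G (r (Suc (Suc i))) d (r (Suc (Suc (Suc i))))" "z \<in> cover_step G (r (Suc (Suc i))) d"
    | (final) k where "n = enat (Suc k)" "z \<in> cover_state G (r (Suc (Suc k)))"
    unfolding run_cover_def by blast
  then show "z \<in> run_cover G r (n + 2)"
  proof cases
    case delay
    then show ?thesis unfolding run_cover_def by (intro UnI1 UN_I[of "Suc (Suc i)"]) auto
  next
    case final
    then show ?thesis unfolding run_cover_def by (intro UnI2 UN_I[of "Suc (Suc k)"]) auto
  qed
qed

lemma run_cover_Cons2_subset:
  assumes "0 < n"
  shows "run_cover G r (n + 2) \<subseteq> {z. fst z = fst (r 0)} \<union> run_cover G (\<lambda>k. r (Suc (Suc k))) n"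
proof
  fix z assume "z \<in> run_cover G r (n + 2)"
  then consider (delay) i d where "even i" "enat (Suc i) < n + 2" "timed_step G (r i) d (r (Suc i))"
      "z \<in> cover_step G (r i) d"
    | (final) k where "n + 2 = enat (Suc k)" "z \<in> cover_state G (r k)"
    unfolding run_cover_def by blast
  then show "z \<in> {z. fst z = fst (r 0)} \<union> run_cover G (\<lambda>k. r (Suc (Suc k))) n"
  proof cases
    case delay
    show ?thesis
    proof (cases i)
      case 0
      with delay show ?thesis using cover_step_fst by blast
    next
      case (Suc i')
      with delay obtain j where "i = Suc (Suc j)" by (cases i') auto
      with delay show ?thesis unfolding run_cover_def by (intro UnI2 UnI1 UN_I[of j]) auto
    qed
  next
    case final
    with \<open>0 < n\<close> obtain j where "k = Suc (Suc j)"
      by (cases n; cases k; cases "k - 1") (auto simp: numeral_eq_enat zero_enat_def)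
    with final show ?thesis unfolding run_cover_def by (intro UnI2 UnI2 UN_I[of j]) auto
  qed
qed

section \<open>Winning states\<close>

lemma Uncontrollable_disjoint_iff:
  "A \<inter> Uncontrollable G S = {} \<longleftrightarrow>
    (\<forall>z\<in>A. \<forall>t\<in>Tu G. \<forall>y. disc_step G z t y \<longrightarrow> y \<in> S)"
  by (auto simp: Uncontrollable_def dest: disc_stepD)

lemma global_strategy_cong:
  "\<sigma>c h = \<sigma>c' h' \<Longrightarrow> \<sigma>e h = \<sigma>e' h' \<Longrightarrow> global_strategy \<sigma>c \<sigma>e h = global_strategy \<sigma>c' \<sigma>e' h'"
  by (simp add: global_strategy_def cong: move.case_cong)

lemma global_strategy_WaitE:
  assumes "\<sigma>c h = Wait d" "\<forall>tu. \<sigma>e h \<noteq> Take tu"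
  obtains \<delta> where "global_strategy \<sigma>c \<sigma>e h = Wait \<delta>" "\<delta> \<le> d" "\<delta> = d \<or> \<sigma>e h = Wait \<delta>"
  using assms by (cases "\<sigma>e h") (auto simp: global_strategy_def min_def intro: that split: if_splits)

definition winning_choice ::
  "('l, 'x, 'p::finite, 'a, 'z) ptg_scheme \<Rightarrow> 'l set \<Rightarrow> ('l, 'x, 'p) state \<Rightarrow> ('l, 'x, 'p, 'a) strategy" where
  "winning_choice G R y = (if y \<in> W G R then SOME \<sigma>. winning_strategy G R \<sigma> y else (\<lambda>_. Forever))"

lemma winning_strategy_winning_choice:
  "y \<in> W G R \<Longrightarrow> winning_strategy G R (winning_choice G R y) y"
  using someI_ex[of "\<lambda>\<sigma>. winning_strategy G R \<sigma> y"] by (auto simp: winning_choice_def W_def)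

lemma ctrl_strategy_winning_choice: "ctrl_strategy G (winning_choice G R y)"
proof (cases "y \<in> W G R")
  case True
  then show ?thesis
    using winning_strategy_winning_choice unfolding winning_strategy_def by blast
qed (simp add: winning_choice_def ctrl_strategy_def valid_strategy_Forever)

lemma W_if_goal_location:
  assumes "s \<in> states G" "fst s \<in> R"
  shows "s \<in> W G R"
proof -
  have "winning_run G R r n" if "induced_run G \<sigma> s r n" for \<sigma> r n
    using start_in_run_cover[OF that assms(1)] assms(2) by (auto simp: winning_run_def)
  then have "winning_strategy G R (\<lambda>h. Forever) s"
    by (auto simp: winning_strategy_def ctrl_strategy_def valid_strategy_Forever)
  with assms show ?thesis by (auto simp: W_def)
qed

text \<open>Against the environment that never moves, a stuck play covers only the location of s.\<close>

lemma winning_strategy_not_stuck: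
  assumes win: "winning_strategy G R \<sigma> s" and nR: "fst s \<notin> R"
    and stuck: "\<sigma> [s] = Forever \<or> (\<sigma> [s] = Wait d \<and> (\<nexists>z. timed_step G s d z))"
  shows False
proof -
  have "induced_run G (global_strategy \<sigma> (\<lambda>h. Forever)) s (\<lambda>_. s) (enat (Suc 0))"
    using stuck by (intro induced_run_stop) (auto simp: global_strategy_def)
  with win have "winning_run G R (\<lambda>_. s) (enat (Suc 0))"
    using valid_strategy_Forever unfolding winning_strategy_def env_strategy_def by blast
  then obtain z where "z \<in> cover_state G s" "fst z \<in> R"
    by (auto simp: winning_run_def run_cover_def)
  with nR show False by (simp add: cover_state_fst)
qed

text \<open>The environment's behaviour after the first two steps is captured by its residual strategy,
  against which \<sigma>' wins.\<close>

lemma winning_run_if_continued: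
  assumes run: "induced_run G (global_strategy \<sigma> e) s r n" and e: "env_strategy G e"
    and n: "enat (Suc (Suc 0)) < n" and win: "winning_strategy G R \<sigma>' (r (Suc (Suc 0)))"
    and agree: "\<And>h. h \<noteq> [] \<Longrightarrow> hd h = r (Suc (Suc 0)) \<Longrightarrow> \<sigma> (r 0 # r (Suc 0) # h) = \<sigma>' h"
  shows "winning_run G R r n"
proof -
  obtain n' where n': "n = n' + 2" "0 < n'"
  proof (cases n)
    case (enat m)
    with n show thesis by (intro that[of "enat (m - 2)"]) (auto simp: numeral_eq_enat zero_enat_def)
  qed (simp add: that[of \<infinity>])
  have "r 0 = s" using run by (simp add: induced_run_iff)
  moreover from n have "enat (Suc 0) < n" by (meson Suc_ile_eq less_imp_le)
  ultimately obtain d t where steps: "timed_step G (r 0) d (r (Suc 0))"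
      "disc_step G (r (Suc 0)) t (r (Suc (Suc 0)))"
    using induced_run_first_steps[OF run] n by auto
  define e' where "e' = residual_strategy e (r 0) (r (Suc 0)) (r (Suc (Suc 0)))"
  have "env_strategy G e'"
    using e steps unfolding env_strategy_def e'_def by (rule valid_residual_strategy)
  moreover have "global_strategy \<sigma> e (r 0 # r (Suc 0) # h) = global_strategy \<sigma>' e' h"
    if "h \<noteq> []" "hd h = r (Suc (Suc 0))" for h
    using that agree by (intro global_strategy_cong) (simp_all add: e'_def residual_strategy_def)
  then have "induced_run G (global_strategy \<sigma>' e') (r (Suc (Suc 0))) (\<lambda>k. r (Suc (Suc k))) n'"
    using run n' induced_run_suffix by blast
  ultimately have "winning_run G R (\<lambda>k. r (Suc (Suc k))) n'"
    using win by (auto simp: winning_strategy_def)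
  with n' run_cover_suffix_subset[of G r n'] show ?thesis
    by (auto simp: winning_run_def)
qed

text \<open>The residual strategy wins from y: the forced prefix stays at the location of s, which is
  not a goal.\<close>

lemma W_if_forced_steps:
  assumes win: "winning_strategy G R \<sigma> s" and nR: "fst s \<notin> R"
    and steps: "timed_step G s \<delta> x" "disc_step G x t y"
    and env: "\<And>e. env_strategy G e \<Longrightarrow> env_strategy G (prefixed_strategy m0 m1 s x e)"
    and forced: "\<And>e. (global_strategy \<sigma> (prefixed_strategy m0 m1 s x e) [s] = Take t \<and> x = s) \<or>
      (global_strategy \<sigma> (prefixed_strategy m0 m1 s x e) [s] = Wait \<delta> \<and>
       global_strategy \<sigma> (prefixed_strategy m0 m1 s x e) [s, x] = Take t)"
  shows "y \<in> W G R"
proof -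
  let ?\<sigma>' = "residual_strategy \<sigma> s x y"
  have "ctrl_strategy G ?\<sigma>'"
    using win steps unfolding winning_strategy_def ctrl_strategy_def
    by (blast intro: valid_residual_strategy)
  moreover have "winning_run G R r n"
    if e: "env_strategy G e" and run: "induced_run G (global_strategy ?\<sigma>' e) y r n" for e r n
  proof -
    let ?\<sigma>g = "global_strategy \<sigma> (prefixed_strategy m0 m1 s x e)"
    have agree: "?\<sigma>g (s # x # h) = global_strategy ?\<sigma>' e h" if "h \<noteq> []" "hd h = y" for h
      using that by (intro global_strategy_cong) (simp_all add: prefixed_strategy_Cons2 residual_strategy_def)
    have "induced_run G ?\<sigma>g s (case_nat s (case_nat x r)) (n + 2)"
      using forced[of e] steps by (intro induced_run_Cons2[OF run agree]) auto
    with win env[OF e] have "winning_run G R (case_nat s (case_nat x r)) (n + 2)"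
      unfolding winning_strategy_def by blast
    then obtain z where z: "z \<in> run_cover G (case_nat s (case_nat x r)) (n + 2)" "fst z \<in> R"
      unfolding winning_run_def by blast
    have "0 < n" using run by (simp add: induced_run_iff)
    from run_cover_Cons2_subset[OF this, of G "case_nat s (case_nat x r)"]
    have "run_cover G (case_nat s (case_nat x r)) (n + 2) \<subseteq> {z. fst z = fst s} \<union> run_cover G r n"
      by simp
    with z(1) have "z \<in> {z. fst z = fst s} \<union> run_cover G r n" by blast
    with z(2) nR have "z \<in> run_cover G r n" by force
    with z show ?thesis by (auto simp: winning_run_def)
  qed
  moreover have "y \<in> states G" using steps disc_stepD by blast
  ultimately show ?thesis by (auto simp: W_def winning_strategy_def)
qed

section \<open>Delaying safely into a winning move\<close>

lemma safe_delay_run_reaches_W: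
  assumes run: "induced_run G (global_strategy \<sigma> e) s r n" and e: "env_strategy G e"
    and moves: "\<sigma> [s] = Wait d" "\<sigma> [s, s'] = Take t"
    and steps: "timed_step G s d s'" "disc_step G s' t s3" and "s3 \<in> W G R"
    and safe: "cover_step G s d \<inter> Uncontrollable G (W G R) = {}"
  shows "enat (Suc (Suc 0)) < n \<and> r (Suc (Suc 0)) \<in> W G R"
proof -
  let ?\<sigma>g = "global_strategy \<sigma> e"
  have e: "valid_strategy G (Tu G) e" using e by (simp add: env_strategy_def)
  have "s \<in> states G" "0 \<le> d" using steps timed_stepD by blast+
  then have hist: "[s] \<in> histories G" and "s \<in> cover_step G s d"
    by (auto intro: singleton_history timed_step_in_cover_step timed_step_zero)
  have unc: "y \<in> W G R" if "z \<in> cover_step G s d" "tu \<in> Tu G" "disc_step G z tu y" for z tu y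
    using safe that unfolding Uncontrollable_disjoint_iff by blast
  show ?thesis
  proof (cases "\<exists>tu. e [s] = Take tu")
    case True
    then obtain tu where tu: "e [s] = Take tu" ..
    then have "?\<sigma>g [s] = Take tu" by (simp add: global_strategy_def)
    with induced_run_TakeD[OF run] valid_strategy_TakeD[OF e hist tu] \<open>s \<in> cover_step G s d\<close>
    show ?thesis by (metis unc)
  next
    case False
    obtain \<delta> where \<delta>: "?\<sigma>g [s] = Wait \<delta>" "\<delta> \<le> d" "\<delta> = d \<or> e [s] = Wait \<delta>"
      using global_strategy_WaitE[of \<sigma> "[s]", OF moves(1)] False by blast
    have "0 \<le> \<delta>" using \<delta>(3) \<open>0 \<le> d\<close> valid_strategy_WaitD[OF e hist] by blast
    obtain z where "timed_step G s \<delta> z" using timed_step_shorter[OF steps(1) \<open>0 \<le> \<delta>\<close> \<delta>(2)] ..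
    with induced_run_WaitD[OF run \<delta>(1)] have n: "enat (Suc 0) < n"
      and r1: "timed_step G s \<delta> (r (Suc 0))" by blast+
    from r1 \<delta>(2) have "r (Suc 0) \<in> cover_step G s d" by (rule timed_step_in_cover_step)
    show ?thesis
    proof (cases "\<exists>tu. e [s, r (Suc 0)] = Take tu")
      case True
      then obtain tu where tu: "e [s, r (Suc 0)] = Take tu" ..
      then have "?\<sigma>g [s, r (Suc 0)] = Take tu" by (simp add: global_strategy_def)
      with induced_run_Wait_TakeD[OF run \<delta>(1) n] valid_strategy_TakeD[OF e two_state_history[OF r1] tu]
        \<open>r (Suc 0) \<in> cover_step G s d\<close>
      show ?thesis by (metis unc)
    next
      case no_Take: False
      show ?thesis
      proof (cases "r (Suc 0) = s'")
        case True
        with no_Take moves have "?\<sigma>g [s, r (Suc 0)] = Take t"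
          by (cases "e [s, s']") (auto simp: global_strategy_def)
        with induced_run_Wait_TakeD[OF run \<delta>(1) n] True steps(2) \<open>s3 \<in> W G R\<close>
        show ?thesis by (metis disc_step_det)
      next
        case False
        with r1 steps(1) \<delta>(3) have "e [s] = Wait \<delta>" by (metis timed_step_det)
        then have "\<exists>tu. e ([s] @ [r (Suc 0)]) = Take tu"
          using valid_strategy_Wait_TakeD[OF e hist] r1 two_state_history[OF r1] by simp
        with no_Take show ?thesis by simp
      qed
    qed
  qed
qed

lemma W_if_safe_delay_to_winning_move:
  assumes delay: "timed_step G s d s'" and move: "s' \<in> WinningMoves G (W G R)"
    and safe: "cover_step G s d \<inter> Uncontrollable G (W G R) = {}"
  shows "s \<in> W G R"
proof -
  obtain t s3 where t: "t \<in> Tc G" "disc_step G s' t s3" "s3 \<in> W G R"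
    using move by (auto simp: WinningMoves_def)
  define \<sigma> where "\<sigma> = prefixed_strategy (Wait d) (Take t) s s' (\<lambda>h. winning_choice G R (hd h) h)"
  have "ctrl_strategy G \<sigma>"
    unfolding ctrl_strategy_def \<sigma>_def
    using valid_strategy_by_first_state[OF ctrl_strategy_winning_choice[unfolded ctrl_strategy_def]]
    by (rule valid_prefixed_strategy) (use delay t disc_step_enabled[OF t(2)] in \<open>auto\<close>)
  moreover have "winning_run G R r n"
    if e: "env_strategy G e" and run: "induced_run G (global_strategy \<sigma> e) s r n" for e r n
  proof -
    have "\<sigma> [s] = Wait d" "\<sigma> [s, s'] = Take t" by (simp_all add: \<sigma>_def prefixed_strategy_def)
    from safe_delay_run_reaches_W[OF run e this delay t(2,3) safe]
    have n: "enat (Suc (Suc 0)) < n" and W: "r (Suc (Suc 0)) \<in> W G R" by blast+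
    have "r 0 = s" using run by (simp add: induced_run_iff)
    then have "\<sigma> (r 0 # r (Suc 0) # h) = winning_choice G R (r (Suc (Suc 0))) h"
      if "h \<noteq> []" "hd h = r (Suc (Suc 0))" for h
      using that by (simp add: \<sigma>_def prefixed_strategy_Cons2)
    with winning_run_if_continued[OF run e n winning_strategy_winning_choice[OF W]] show ?thesis .
  qed
  moreover have "s \<in> states G" using delay timed_stepD by blast
  ultimately show ?thesis by (auto simp: W_def winning_strategy_def)
qed

section \<open>Winning states reach winning moves safely\<close>

context
  fixes G :: "('l, 'x, 'p::finite, 'a, 'z) ptg_scheme" and R and \<sigma> and s
  assumes win: "winning_strategy G R \<sigma> s" and nR: "fst s \<notin> R"
begin

lemma W_if_initial_Take:
  assumes "\<sigma> [s] = Take t" "disc_step G s t y"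
  shows "y \<in> W G R"
proof (rule W_if_forced_steps[OF win nR _ assms(2), of 0 Forever Forever])
  show "timed_step G s 0 s" using assms(2) by (blast intro: timed_step_zero dest: disc_stepD)
  show "env_strategy G (prefixed_strategy Forever Forever s s e)" if "env_strategy G e" for e
    using that unfolding env_strategy_def by (rule valid_prefixed_strategy) auto
qed (simp add: global_strategy_def prefixed_strategy_def assms(1))

lemma W_if_Tu_successor:
  assumes "tu \<in> Tu G" "disc_step G s tu y"
  shows "y \<in> W G R"
proof (rule W_if_forced_steps[OF win nR _ assms(2), of 0 "Take tu" Forever])
  show "timed_step G s 0 s" using assms(2) by (blast intro: timed_step_zero dest: disc_stepD)
  show "env_strategy G (prefixed_strategy (Take tu) Forever s s e)" if "env_strategy G e" for e
    using that unfolding env_strategy_def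
    by (rule valid_prefixed_strategy) (use assms disc_step_enabled[OF assms(2)] in auto)
qed (simp add: global_strategy_def prefixed_strategy_def)

lemma W_if_Wait_Take:
  assumes "\<sigma> [s] = Wait d" "timed_step G s d x" "\<sigma> [s, x] = Take t" "disc_step G x t y"
  shows "y \<in> W G R"
proof (rule W_if_forced_steps[OF win nR assms(2,4), of Forever Forever])
  show "env_strategy G (prefixed_strategy Forever Forever s x e)" if "env_strategy G e" for e
    using that unfolding env_strategy_def by (rule valid_prefixed_strategy) auto
qed (simp add: global_strategy_def prefixed_strategy_def assms(1,3))

lemma W_if_Tu_successor_during_Wait:
  assumes "\<sigma> [s] = Wait d" "timed_step G s \<delta> z" "\<delta> \<le> d" "tu \<in> Tu G" "disc_step G z tu y"
  shows "y \<in> W G R"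
proof (rule W_if_forced_steps[OF win nR assms(2,5), of "Wait \<delta>" "Take tu"])
  show "env_strategy G (prefixed_strategy (Wait \<delta>) (Take tu) s z e)" if "env_strategy G e" for e
    using that unfolding env_strategy_def
    by (rule valid_prefixed_strategy)
       (use assms disc_step_enabled[OF assms(5)] in \<open>auto\<close>)
qed (use assms(1,3) in \<open>simp add: global_strategy_def prefixed_strategy_def min_def\<close>)

end

lemma W_reaches_winning_move:
  assumes "s \<in> W G R" and nR: "fst s \<notin> R"
  shows "\<exists>d s'. timed_step G s d s' \<and> s' \<in> WinningMoves G (W G R) \<and>
    cover_step G s d \<inter> Uncontrollable G (W G R) = {}"
proof -
  obtain \<sigma> where win: "winning_strategy G R \<sigma> s" and s: "s \<in> states G"
    using assms(1) by (auto simp: W_def)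
  then have \<sigma>: "valid_strategy G (Tc G) \<sigma>" by (simp add: winning_strategy_def ctrl_strategy_def)
  have hist: "[s] \<in> histories G" using s by (rule singleton_history)
  show ?thesis
  proof (cases "\<sigma> [s]")
    case (Take t)
    with valid_strategy_TakeD[OF \<sigma> hist] have t: "t \<in> Tc G" "enabled G s t" by auto
    moreover from t have "t \<in> Tr G" by (simp add: Tr_def)
    ultimately obtain y where y: "disc_step G s t y"
      using s enabled_disc_stepE by blast
    with W_if_initial_Take[OF win nR Take y] s t(1) have "s \<in> WinningMoves G (W G R)"
      by (auto simp: WinningMoves_def)
    moreover have "cover_step G s 0 \<inter> Uncontrollable G (W G R) = {}"
      using W_if_Tu_successor[OF win nR] by (simp add: cover_step_zero[OF s] Uncontrollable_disjoint_iff)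
    ultimately show ?thesis using timed_step_zero[OF s] by blast
  next
    case Forever
    with winning_strategy_not_stuck[OF win nR] show ?thesis by blast
  next
    case (Wait d)
    with winning_strategy_not_stuck[OF win nR] obtain s' where delay: "timed_step G s d s'"
      by blast
    have "\<exists>t. \<sigma> ([s] @ [s']) = Take t"
      using valid_strategy_Wait_TakeD[OF \<sigma> hist Wait, of s'] delay two_state_history[OF delay] by simp
    then obtain t where t: "\<sigma> [s, s'] = Take t" by auto
    with valid_strategy_TakeD[OF \<sigma> two_state_history[OF delay]]
    have t_Tc: "t \<in> Tc G" and "enabled G s' t" by auto
    moreover from t_Tc have "t \<in> Tr G" by (simp add: Tr_def)
    moreover have "s' \<in> states G" using delay timed_stepD by blast
    ultimately obtain y where y: "disc_step G s' t y"
      using enabled_disc_stepE by blast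
    with W_if_Wait_Take[OF win nR Wait delay t y] delay t_Tc have "s' \<in> WinningMoves G (W G R)"
      by (auto simp: WinningMoves_def dest: timed_stepD)
    moreover have "cover_step G s d \<inter> Uncontrollable G (W G R) = {}"
      using W_if_Tu_successor_during_Wait[OF win nR Wait]
      by (auto simp: Uncontrollable_disjoint_iff cover_step_def)
    ultimately show ?thesis using delay by blast
  qed
qed

theorem lemmaA1:
  fixes G :: "('l::finite, 'x::finite, 'p::finite, 'a) ptg"
    and R :: "'l set"
  assumes "ptg_wf G"
  shows "SafePred G (W G R \<union> WinningMoves G (W G R)) (Uncontrollable G (W G R)) \<subseteq> W G R"
proof
  fix s assume "s \<in> SafePred G (W G R \<union> WinningMoves G (W G R)) (Uncontrollable G (W G R))"
  then obtain s' d where s: "s \<in> states G" and s': "s' \<in> W G R \<union> WinningMoves G (W G R)"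
    and delay: "timed_step G s d s'" and safe: "cover_step G s d \<inter> Uncontrollable G (W G R) = {}"
    by (auto simp: SafePred_def)
  show "s \<in> W G R"
  proof (cases "fst s \<in> R \<or> s' \<in> WinningMoves G (W G R)")
    case True
    with s delay safe show ?thesis by (blast intro: W_if_goal_location W_if_safe_delay_to_winning_move)
  next
    case False
    with s' delay have "s' \<in> W G R" "fst s' \<notin> R" by (auto dest: timed_stepD)
    then obtain d' s'' where delay': "timed_step G s' d' s''" and "s'' \<in> WinningMoves G (W G R)"
      and safe': "cover_step G s' d' \<inter> Uncontrollable G (W G R) = {}"
      by (blast dest: W_reaches_winning_move)
    moreover have "cover_step G s (d + d') \<inter> Uncontrollable G (W G R) = {}"
      using cover_step_add[OF delay, of d'] safe safe' by blast
    ultimately show ?thesis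
      using timed_step_add[OF delay delay'] by (blast intro: W_if_safe_delay_to_winning_move)
  qed
qed

end
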